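(* Let $X$ be a topological space and $Y$ be a metrizable, connected and locally arcwise connected space. Then $\Sigma_0^{f*}(X,Y)\subseteq \mathrm{B}_1(X,Y)$.
   Context: Functionally closed/open sets: zero sets of continuous functions $X\to[0,1]$, resp. their complements. A family $(A_i:i\in I)$ of subsets of $X$ is strongly functionally discrete (sfd) if there is a discrete family $(U_i:i\in I)$ of functionally open sets with $\overline{A_i}\subseteq U_i$ for all $i$; $\sigma$-sfd means a countable union of sfd families. A family $\mathcal B$ is a base for $f:X\to Y$ if each $f^{-1}(V)$, $V\subseteq Y$ open, is a union of members of $\mathcal B$. $\Sigma^{f*}_0(X,Y)$: mappings $f:X\to Y$ having a $\sigma$-sfd base consisting of functionally closed subsets of $X$. $\mathrm{B}_1(X,Y)$: pointwise limits of sequences of continuous mappings $X\to Y$. *)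

theory Defs
  imports "HOL-Analysis.Analysis"
begin

definition arc_connectedin :: "'a topology \<Rightarrow> 'a set \<Rightarrow> bool" where
  "arc_connectedin X S \<longleftrightarrow> S \<subseteq> topspace X \<and>
     (\<forall>x\<in>S. \<forall>y\<in>S. x \<noteq> y \<longrightarrow>
        (\<exists>g. embedding_map (top_of_set {0..1::real}) (subtopology X S) g \<and> g 0 = x \<and> g 1 = y))"

definition locally_arc_connected_space :: "'a topology \<Rightarrow> bool" where
  "locally_arc_connected_space X \<longleftrightarrow> neighbourhood_base_of (arc_connectedin X) X"

definition functionally_closed :: "'a topology \<Rightarrow> 'a set \<Rightarrow> bool" where
  "functionally_closed X A \<longleftrightarrow>
     (\<exists>g. continuous_map X (top_of_set {0..1::real}) g \<and> A = {x \<in> topspace X. g x = 0})"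

definition functionally_open :: "'a topology \<Rightarrow> 'a set \<Rightarrow> bool" where
  "functionally_open X U \<longleftrightarrow> U \<subseteq> topspace X \<and> functionally_closed X (topspace X - U)"

definition discrete_family :: "'a topology \<Rightarrow> 'i set \<Rightarrow> ('i \<Rightarrow> 'a set) \<Rightarrow> bool" where
  "discrete_family X I U \<longleftrightarrow>
     (\<forall>x\<in>topspace X. \<exists>V. openin X V \<and> x \<in> V \<and>
        (\<forall>i\<in>I. \<forall>j\<in>I. V \<inter> U i \<noteq> {} \<and> V \<inter> U j \<noteq> {} \<longrightarrow> i = j))"

definition sfd_family :: "'a topology \<Rightarrow> 'i set \<Rightarrow> ('i \<Rightarrow> 'a set) \<Rightarrow> bool" where
  "sfd_family X I A \<longleftrightarrow>
     (\<exists>U. (\<forall>i\<in>I. functionally_open X (U i)) \<and> discrete_family X I U \<and>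
          (\<forall>i\<in>I. X closure_of (A i) \<subseteq> U i))"

definition sigma_sfd :: "'a topology \<Rightarrow> 'a set set \<Rightarrow> bool" where
  "sigma_sfd X \<B> \<longleftrightarrow> (\<exists>\<B>n :: nat \<Rightarrow> 'a set set. \<B> = (\<Union>n. \<B>n n) \<and> (\<forall>n. sfd_family X (\<B>n n) id))"

definition base_for :: "'a topology \<Rightarrow> 'b topology \<Rightarrow> 'a set set \<Rightarrow> ('a \<Rightarrow> 'b) \<Rightarrow> bool" where
  "base_for X Y \<B> f \<longleftrightarrow>
     (\<forall>V. openin Y V \<longrightarrow> (\<exists>\<C>\<subseteq>\<B>. \<Union>\<C> = {x \<in> topspace X. f x \<in> V}))"

definition Sigma_f_star_0 :: "'a topology \<Rightarrow> 'b topology \<Rightarrow> ('a \<Rightarrow> 'b) set" where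
  "Sigma_f_star_0 X Y = {f. f ` topspace X \<subseteq> topspace Y \<and>
     (\<exists>\<B>. sigma_sfd X \<B> \<and> (\<forall>B\<in>\<B>. functionally_closed X B) \<and> base_for X Y \<B> f)}"

definition Baire_one :: "'a topology \<Rightarrow> 'b topology \<Rightarrow> ('a \<Rightarrow> 'b) set" where
  "Baire_one X Y = {f. f ` topspace X \<subseteq> topspace Y \<and>
     (\<exists>fn :: nat \<Rightarrow> 'a \<Rightarrow> 'b. (\<forall>n. continuous_map X Y (fn n)) \<and>
        (\<forall>x\<in>topspace X. limitin Y (\<lambda>n. fn n x) (f x) sequentially))}"

end

theory Submission
  imports Defs
begin

(*
  Write the base of f as the union of the families B_n, each strongly functionally discrete with
  witnesses U_n, and pick phi : X -> [0,1] with phi^-1(1) = B vanishing off U_n(B) for every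
  member B. Near a point only one member of each family is visible, so anything depending
  continuously on finitely many of the functions phi is continuous on X.

  The k-th approximation f_k(x) is a chain of paths in Y. At precision level m = 0..k it scans the
  members of B_0, ..., B_k around x on which f oscillates by less than 2^-m, weighted by sharpened
  values of phi; the first substantial weight moves the current point along a path towards the
  value of f on that member, and a weight close to 1 hands over to level m + 1. As k grows the
  sharpened weights tend to 1 on the first such member containing x and to 0 on all earlier ones,
  so f_k(x) eventually passes through values of f that converge to f(x). Local path-connectedness
  keeps the connecting paths short, whence f_k(x) -> f(x).
*)

section \<open>Chains of paths\<close>

text \<open>A row is read from left to right with a budget \<open>l \<in> [0,1]\<close>. The regimes agree at \<open>s = 1/2\<close> and
  \<open>s = 3/4\<close>, which makes the result continuous in the weights.\<close>
primrec chain_row :: "(nat \<Rightarrow> 'b \<Rightarrow> 'b \<Rightarrow> bool) \<Rightarrow> (nat \<Rightarrow> 'b \<Rightarrow> 'b \<Rightarrow> real \<Rightarrow> 'b) \<Rightarrow> nat \<Rightarrow>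
    (real \<times> 'b) list \<Rightarrow> ('b \<Rightarrow> real \<Rightarrow> 'b) \<Rightarrow> 'b \<Rightarrow> real \<Rightarrow> 'b" where
  "chain_row adm link m [] K b l = b"
| "chain_row adm link m (e # r) K b l =
     (let s = (if adm m b (snd e) then l * fst e else 0) in
      if s \<le> 1/2 then chain_row adm link m r K b (max 0 (l - 2 * s))
      else if s \<le> 3/4 then link m b (snd e) (min 1 (max 0 (4 * s - 2)))
      else K (snd e) (min 1 (max 0 (4 * s - 3))))"

primrec chain :: "(nat \<Rightarrow> 'b \<Rightarrow> 'b \<Rightarrow> bool) \<Rightarrow> (nat \<Rightarrow> 'b \<Rightarrow> 'b \<Rightarrow> real \<Rightarrow> 'b) \<Rightarrow> nat \<Rightarrow>
    (real \<times> 'b) list list \<Rightarrow> 'b \<Rightarrow> real \<Rightarrow> 'b" where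
  "chain adm link m [] b l = b"
| "chain adm link m (r # rs) b l = chain_row adm link m r (chain adm link (Suc m) rs) b l"

lemma chain_row_zero [simp]: "chain_row adm link m r K b 0 = b"
  by (induction r) (auto simp: Let_def)

lemma chain_zero [simp]: "chain adm link m rs b 0 = b"
  by (cases rs) auto

definition entry_agrees :: "(real \<times> 'b) \<Rightarrow> (real \<times> 'b) \<Rightarrow> bool" where
  "entry_agrees e e' \<longleftrightarrow> fst e = fst e' \<and> (fst e \<noteq> 0 \<longrightarrow> snd e = snd e')"

lemma chain_row_cong:
  "list_all2 entry_agrees r r' \<Longrightarrow> chain_row adm link m r K b l = chain_row adm link m r' K b l"
proof (induction r arbitrary: r' l)
  case (Cons e r)
  then obtain e' r'' where "r' = e' # r''" "entry_agrees e e'" "list_all2 entry_agrees r r''"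
    by (auto simp: list_all2_Cons1)
  moreover from this have "\<And>l. chain_row adm link m r K b l = chain_row adm link m r'' K b l"
    using Cons.IH by blast
  ultimately show ?case
    by (cases "fst e = 0") (simp_all add: entry_agrees_def Let_def)
qed simp

lemma chain_cong:
  "list_all2 (list_all2 entry_agrees) rs rs' \<Longrightarrow> chain adm link m rs b l = chain adm link m rs' b l"
proof (induction rs arbitrary: rs' m b l)
  case (Cons r rs)
  then obtain r' rs'' where "rs' = r' # rs''" "list_all2 entry_agrees r r'"
      "list_all2 (list_all2 entry_agrees) rs rs''"
    by (auto simp: list_all2_Cons1)
  moreover from this Cons.IH have "chain adm link (Suc m) rs = chain adm link (Suc m) rs''"
    by (intro ext) auto
  ultimately show ?case
    by (simp add: chain_row_cong)
qed simp

lemma chain_row_eq_next: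
  assumes "j < length r" "r ! j = (1, y)" "adm m b y" "\<forall>i<j. fst (r ! i) = 0"
  shows "chain_row adm link m r K b 1 = K y 1"
  using assms
proof (induction r arbitrary: j)
  case (Cons e r)
  show ?case
  proof (cases j)
    case (Suc j')
    with Cons.prems have "fst e = 0" "chain_row adm link m r K b 1 = K y 1"
      by (auto intro!: Cons.IH[of j'])
    then show ?thesis
      by (simp add: Let_def)
  qed (use Cons.prems in \<open>simp add: Let_def\<close>)
qed simp

lemma chain_row_in:
  assumes "b \<in> R" "\<And>y t. adm m b y \<Longrightarrow> y \<in> A \<Longrightarrow> 0 \<le> t \<Longrightarrow> t \<le> 1 \<Longrightarrow> link m b y t \<in> R"
    and "\<And>y t. adm m b y \<Longrightarrow> y \<in> A \<Longrightarrow> K y t \<in> R" and "snd ` set r \<subseteq> A"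
  shows "chain_row adm link m r K b l \<in> R"
  using assms(4)
  by (induction r arbitrary: l) (auto simp: Let_def assms(1-3))

lemma chain_in:
  assumes "\<And>m b. S m b \<Longrightarrow> b \<in> R"
    and "\<And>m b y. S m b \<Longrightarrow> adm m b y \<Longrightarrow> y \<in> A \<Longrightarrow> S (Suc m) y"
    and "\<And>m b y t. S m b \<Longrightarrow> adm m b y \<Longrightarrow> y \<in> A \<Longrightarrow> 0 \<le> t \<Longrightarrow> t \<le> 1 \<Longrightarrow> link m b y t \<in> R"
    and "\<forall>r\<in>set rs. snd ` set r \<subseteq> A" and "S m b"
  shows "chain adm link m rs b l \<in> R"
  using assms(4,5)
proof (induction rs arbitrary: m b l)
  case (Cons r rs)
  then show ?case
    unfolding chain.simps by (intro chain_row_in[where A = A]) (use assms(1-3) in auto)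
qed (use assms(1) in simp)

lemma continuous_map_if_le_le:
  assumes s: "continuous_map Z euclideanreal s" and "a \<le> c"
    and F: "continuous_map Z Y F" and G: "continuous_map Z Y G" and H: "continuous_map Z Y H"
    and "\<And>z. z \<in> topspace Z \<Longrightarrow> s z = a \<Longrightarrow> F z = G z"
    and "\<And>z. z \<in> topspace Z \<Longrightarrow> s z = c \<Longrightarrow> G z = H z"
  shows "continuous_map Z Y (\<lambda>z. if s z \<le> a then F z else if s z \<le> c then G z else H z)"
proof -
  have "continuous_map Z Y (\<lambda>z. if s z \<le> c then G z else H z)"
    by (rule continuous_map_cases_le[OF s continuous_map_const[THEN iffD2]])
       (use G H assms(7) in \<open>auto intro: continuous_map_from_subtopology\<close>)
  then show ?thesis
    by (intro continuous_map_cases_le[OF s continuous_map_const[THEN iffD2]])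
       (use F assms(2,6) in \<open>auto intro: continuous_map_from_subtopology\<close>)
qed

lemma continuous_map_clamp:
  "continuous_map Z euclideanreal g \<Longrightarrow> continuous_map Z (top_of_set {0..1}) (\<lambda>z. min 1 (max 0 (g z)))"
  by (auto intro!: continuous_map_into_subtopology continuous_intros)

definition unit_valued :: "'a topology \<Rightarrow> ('a \<Rightarrow> real) \<Rightarrow> bool" where
  "unit_valued Z w \<longleftrightarrow> continuous_map Z euclideanreal w \<and> (\<forall>z\<in>topspace Z. 0 \<le> w z \<and> w z \<le> 1)"

lemma unit_valued_const: "unit_valued X (\<lambda>_. 1)"
  by (simp add: unit_valued_def)

lemma unit_valued_subtopology: "unit_valued X w \<Longrightarrow> unit_valued (subtopology X V) w"
  by (simp add: unit_valued_def continuous_map_from_subtopology)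

lemma continuous_map_chain_row:
  assumes link: "\<And>b y. b \<in> topspace Y \<Longrightarrow> y \<in> topspace Y \<Longrightarrow> adm m b y \<Longrightarrow>
      pathin Y (link m b y) \<and> link m b y 0 = b \<and> link m b y 1 = y"
    and K: "\<And>y L. y \<in> topspace Y \<Longrightarrow> unit_valued Z L \<Longrightarrow> continuous_map Z Y (\<lambda>z. K z y (L z))"
    and K0: "\<And>z y. K z y 0 = y"
    and entries: "\<forall>e\<in>set r. unit_valued Z (fst e) \<and> snd e \<in> topspace Y"
    and L: "unit_valued Z L" and b: "b \<in> topspace Y"
  shows "continuous_map Z Y (\<lambda>z. chain_row adm link m (map (\<lambda>e. (fst e z, snd e)) r) (K z) b (L z))"
  using entries L
proof (induction r arbitrary: L)
  case (Cons e r)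
  obtain T y where e: "e = (T, y)"
    by fastforce
  with Cons.prems have T: "unit_valued Z T" and y: "y \<in> topspace Y"
    and IH: "\<And>L. unit_valued Z L \<Longrightarrow>
      continuous_map Z Y (\<lambda>z. chain_row adm link m (map (\<lambda>e. (fst e z, snd e)) r) (K z) b (L z))"
    using Cons.IH by auto
  show ?case
  proof (cases "adm m b y")
    case False
    then show ?thesis
      using IH[OF Cons.prems(2)] Cons.prems(2)
      by (rule_tac continuous_map_eq) (auto simp: e Let_def unit_valued_def)
  next
    case True
    define s where "s z = L z * T z" for z
    have s: "unit_valued Z s"
      using Cons.prems(2) T by (auto simp: unit_valued_def s_def[abs_def] mult_le_one intro!: continuous_intros)
    then have sc: "continuous_map Z euclideanreal s"
      by (simp add: unit_valued_def)
    have "continuous_map Z Y (\<lambda>z. link m b y (min 1 (max 0 (4 * s z - 2))))"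
      using continuous_map_compose[OF continuous_map_clamp, of Z "\<lambda>z. 4 * s z - 2" Y "link m b y"]
        link[OF b y True] sc
      by (simp add: pathin_def o_def continuous_intros)
    moreover have "continuous_map Z Y (\<lambda>z. K z y (min 1 (max 0 (4 * s z - 3))))"
      using sc by (intro K[OF y]) (auto simp: unit_valued_def intro!: continuous_intros)
    moreover have "continuous_map Z Y
        (\<lambda>z. chain_row adm link m (map (\<lambda>e. (fst e z, snd e)) r) (K z) b (max 0 (L z - 2 * s z)))"
      using Cons.prems(2) s
      by (intro IH) (fastforce simp: unit_valued_def intro!: continuous_intros)
    ultimately have "continuous_map Z Y (\<lambda>z. if s z \<le> 1/2
        then chain_row adm link m (map (\<lambda>e. (fst e z, snd e)) r) (K z) b (max 0 (L z - 2 * s z))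
        else if s z \<le> 3/4 then link m b y (min 1 (max 0 (4 * s z - 2)))
        else K z y (min 1 (max 0 (4 * s z - 3))))"
      using Cons.prems(2) link[OF b y True] K0
      by (intro continuous_map_if_le_le[OF sc]) (auto simp: unit_valued_def)
    then show ?thesis
      using True by (simp only: e s_def Let_def list.map chain_row.simps fst_conv snd_conv if_True)
  qed
qed (use b in simp)

lemma continuous_map_chain:
  assumes link: "\<And>m b y. b \<in> topspace Y \<Longrightarrow> y \<in> topspace Y \<Longrightarrow> adm m b y \<Longrightarrow>
      pathin Y (link m b y) \<and> link m b y 0 = b \<and> link m b y 1 = y"
    and rs: "\<forall>r\<in>set rs. \<forall>e\<in>set r. unit_valued Z (fst e) \<and> snd e \<in> topspace Y"
    and L: "unit_valued Z L" and b: "b \<in> topspace Y"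
  shows "continuous_map Z Y (\<lambda>z. chain adm link m (map (map (\<lambda>e. (fst e z, snd e))) rs) b (L z))"
  using rs L b
proof (induction rs arbitrary: m b L)
  case (Cons r rs)
  then show ?case
    unfolding list.map chain.simps by (intro continuous_map_chain_row[where Y = Y] link) auto
qed simp

lemma arc_connectedin_imp_path_connectedin:
  assumes "arc_connectedin Y S"
  shows "path_connectedin Y S"
proof -
  have S: "S \<subseteq> topspace Y"
    using assms by (simp add: arc_connectedin_def)
  have "\<exists>g. pathin Y g \<and> g \<in> {0..1} \<rightarrow> S \<and> g 0 = x \<and> g 1 = y" if xy: "x \<in> S" "y \<in> S" for x y
  proof (cases "x = y")
    case True
    then show ?thesis
      using xy S by (intro exI[of _ "\<lambda>_. x"]) auto
  next
    case False
    then obtain g where g: "embedding_map (top_of_set {0..1::real}) (subtopology Y S) g" "g 0 = x" "g 1 = y"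
      using assms xy unfolding arc_connectedin_def by blast
    then have "pathin (subtopology Y S) g"
      unfolding pathin_def embedding_map_def
      by (meson continuous_map_in_subtopology homeomorphic_imp_continuous_map)
    then show ?thesis
      using g by (auto simp: pathin_subtopology)
  qed
  then show ?thesis
    using S by (simp add: path_connectedin)
qed

lemma locally_arc_connected_imp_locally_path_connected_space:
  "locally_arc_connected_space Y \<Longrightarrow> locally_path_connected_space Y"
  unfolding locally_arc_connected_space_def locally_path_connected_space_def
  by (erule neighbourhood_base_of_mono) (rule arc_connectedin_imp_path_connectedin)

lemma continuous_map_locally:
  assumes "\<And>x. x \<in> topspace X \<Longrightarrow> \<exists>V. openin X V \<and> x \<in> V \<and> continuous_map (subtopology X V) Y f"
  shows "continuous_map X Y f"
  by (rule pasting_lemma[where I = "{V. openin X V \<and> continuous_map (subtopology X V) Y f}" and T = id])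
     (use assms in auto)

lemma functionally_closed_subset_topspace: "functionally_closed X A \<Longrightarrow> A \<subseteq> topspace X"
  by (auto simp: functionally_closed_def)

lemma continuous_map_unit_interval:
  "continuous_map X (top_of_set {0..1}) g \<longleftrightarrow>
     continuous_map X euclideanreal g \<and> (\<forall>x\<in>topspace X. 0 \<le> g x \<and> g x \<le> 1)"
  by (auto simp: continuous_map_in_subtopology)

definition separating_function :: "'a topology \<Rightarrow> 'a set \<Rightarrow> 'a set \<Rightarrow> ('a \<Rightarrow> real) \<Rightarrow> bool" where
  "separating_function X A U \<phi> \<longleftrightarrow> continuous_map X euclideanreal \<phi> \<and>
     (\<forall>x\<in>topspace X. 0 \<le> \<phi> x \<and> \<phi> x \<le> 1 \<and> (\<phi> x = 1 \<longleftrightarrow> x \<in> A) \<and> (x \<notin> U \<longrightarrow> \<phi> x = 0))"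

lemma functionally_closed_open_separation:
  assumes "functionally_closed X A" "functionally_open X U" "A \<subseteq> U"
  shows "\<exists>\<phi>. separating_function X A U \<phi>"
proof -
  obtain g where g: "continuous_map X euclideanreal g" "\<forall>x\<in>topspace X. 0 \<le> g x \<and> g x \<le> 1"
      "A = {x \<in> topspace X. g x = 0}"
    using assms(1) unfolding functionally_closed_def continuous_map_unit_interval by blast
  obtain h where h: "continuous_map X euclideanreal h" "\<forall>x\<in>topspace X. 0 \<le> h x \<and> h x \<le> 1"
      "topspace X - U = {x \<in> topspace X. h x = 0}"
    using assms(2) unfolding functionally_open_def functionally_closed_def continuous_map_unit_interval
    by blast
  have pos: "g x + h x > 0" if "x \<in> topspace X" for x
  proof -
    have "g x \<noteq> 0 \<or> h x \<noteq> 0"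
      using that g(3) h(3) assms(3) by blast
    then show ?thesis
      using that g(2) h(2) by force
  qed
  have "separating_function X A U (\<lambda>x. h x / (g x + h x))"
    unfolding separating_function_def
  proof (intro conjI ballI)
    show "continuous_map X euclideanreal (\<lambda>x. h x / (g x + h x))"
      using g(1) h(1) pos by (intro continuous_map_real_divide continuous_intros) force+
    fix x
    assume x: "x \<in> topspace X"
    show "0 \<le> h x / (g x + h x)" "h x / (g x + h x) \<le> 1"
      using g(2) h(2) pos[OF x] x by (simp_all add: divide_simps)
    show "h x / (g x + h x) = 1 \<longleftrightarrow> x \<in> A"
      using g(3) pos[OF x] x by (simp add: divide_simps)
    show "x \<notin> U \<longrightarrow> h x / (g x + h x) = 0"
      using h(3) x by auto
  qed
  then show ?thesis
    by blast
qed

lemma sfd_family_separating_functions: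
  assumes "sfd_family X \<A> id" and "\<And>A. A \<in> \<A> \<Longrightarrow> functionally_closed X A"
  shows "\<exists>U \<phi>. discrete_family X \<A> U \<and>
    (\<forall>A\<in>\<A>. A \<subseteq> topspace X \<and> A \<subseteq> U A \<and> separating_function X A (U A) (\<phi> A))"
proof -
  obtain U where U: "\<And>A. A \<in> \<A> \<Longrightarrow> functionally_open X (U A)" "discrete_family X \<A> U"
    "\<And>A. A \<in> \<A> \<Longrightarrow> X closure_of A \<subseteq> U A"
    using assms(1) unfolding sfd_family_def by auto
  have sub: "A \<subseteq> topspace X \<and> A \<subseteq> U A" if "A \<in> \<A>" for A
    using functionally_closed_subset_topspace[OF assms(2)[OF that]] closure_of_subset U(3)[OF that]
    by blast
  then have "\<forall>A\<in>\<A>. \<exists>\<phi>. separating_function X A (U A) \<phi>"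
    using assms(2) U(1) by (blast intro: functionally_closed_open_separation)
  then obtain \<phi> where "\<forall>A\<in>\<A>. separating_function X A (U A) (\<phi> A)"
    by (rule exE[OF bchoice])
  with U(2) sub show ?thesis
    by blast
qed

definition sharpen :: "nat \<Rightarrow> real \<Rightarrow> real" where
  "sharpen k v = max 0 (1 - (real k + 1) * (1 - v))"

lemma sharpen_0 [simp]: "sharpen k 0 = 0" and sharpen_1 [simp]: "sharpen k 1 = 1"
  by (simp_all add: sharpen_def)

lemma sharpen_bounds: "0 \<le> v \<Longrightarrow> v \<le> 1 \<Longrightarrow> 0 \<le> sharpen k v \<and> sharpen k v \<le> 1"
  by (auto simp: sharpen_def)

lemma continuous_map_sharpen [continuous_intros]:
  "continuous_map Z euclideanreal g \<Longrightarrow> continuous_map Z euclideanreal (\<lambda>z. sharpen k (g z))"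
  unfolding sharpen_def by (intro continuous_intros)

lemma eventually_sharpen_eq_0:
  assumes "v < 1"
  shows "eventually (\<lambda>k. sharpen k v = 0) sequentially"
proof -
  obtain K :: nat where K: "1 / (1 - v) < real K"
    using reals_Archimedean2 by blast
  have "sharpen k v = 0" if "K \<le> k" for k
  proof -
    have "1 < real K * (1 - v)"
      using K assms by (simp add: field_simps)
    also have "\<dots> \<le> (real k + 1) * (1 - v)"
      using that assms by (intro mult_right_mono) auto
    finally show ?thesis
      by (simp add: sharpen_def)
  qed
  then show ?thesis
    unfolding eventually_sequentially by blast
qed

section \<open>Short paths in metric spaces\<close>

context Metric_space
begin

definition mball_path :: "real \<Rightarrow> 'a \<Rightarrow> 'a \<Rightarrow> (real \<Rightarrow> 'a) \<Rightarrow> bool" where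
  "mball_path r b y g \<longleftrightarrow> pathin mtopology g \<and> g 0 = b \<and> g 1 = y \<and> g ` {0..1} \<subseteq> mball b r"

text \<open>Among the finitely many radii \<open>2\<^sup>-\<^sup>n\<close>, \<open>n \<le> m\<close>, take the smallest one admitting a path.\<close>
lemma exists_path_mball_levels:
  assumes "path_connected_space mtopology" "b \<in> M" "y \<in> M"
  shows "\<exists>g. pathin mtopology g \<and> g 0 = b \<and> g 1 = y \<and>
           (\<forall>n\<le>m. (\<exists>g'. mball_path (1/2^n) b y g') \<longrightarrow> mball_path (1/2^n) b y g)"
proof (cases "\<exists>n\<le>m. \<exists>g. mball_path (1/2^n) b y g")
  case False
  then show ?thesis
    using assms by (auto simp: path_connected_space_def)
next
  case True
  define N where "N = {n. n \<le> m \<and> (\<exists>g. mball_path (1/2^n) b y g)}"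
  have "finite N" "N \<noteq> {}"
    using True by (auto simp: N_def)
  then have "Max N \<in> N" "\<And>n. n \<in> N \<Longrightarrow> n \<le> Max N"
    by auto
  then obtain g where g: "mball_path (1/2^Max N) b y g" and le: "\<And>n. n \<in> N \<Longrightarrow> n \<le> Max N"
    by (auto simp: N_def)
  have "mball_path (1/2^n) b y g" if "n \<in> N" for n
  proof -
    have "(1::real)/2^Max N \<le> 1/2^n"
      using le[OF that] by (simp add: frac_le)
    then show ?thesis
      using g by (auto simp: mball_path_def)
  qed
  moreover have "pathin mtopology g \<and> g 0 = b \<and> g 1 = y"
    using g by (simp add: mball_path_def)
  ultimately show ?thesis
    by (auto simp: N_def)
qed

definition level_path :: "nat \<Rightarrow> 'a \<Rightarrow> 'a \<Rightarrow> real \<Rightarrow> 'a" where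
  "level_path m b y = (SOME g. pathin mtopology g \<and> g 0 = b \<and> g 1 = y \<and>
     (\<forall>n\<le>m. (\<exists>g'. mball_path (1/2^n) b y g') \<longrightarrow> mball_path (1/2^n) b y g))"

lemma level_path:
  assumes "path_connected_space mtopology" "b \<in> M" "y \<in> M"
  shows "pathin mtopology (level_path m b y)" "level_path m b y 0 = b" "level_path m b y 1 = y"
    and "n \<le> m \<Longrightarrow> mball_path (1/2^n) b y g \<Longrightarrow> mball_path (1/2^n) b y (level_path m b y)"
  using someI_ex[OF exists_path_mball_levels[OF assms, of m]] unfolding level_path_def by blast+

lemma level_path_short:
  assumes "path_connected_space mtopology" "locally_path_connected_space mtopology" "p \<in> M"
  obtains \<delta> where "0 < \<delta>" "\<delta> \<le> 1/2^Suc n\<^sub>0"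
    "\<And>m b y t. n\<^sub>0 \<le> m \<Longrightarrow> b \<in> mball p \<delta> \<Longrightarrow> y \<in> mball p \<delta> \<Longrightarrow> t \<in> {0..1} \<Longrightarrow>
       level_path m b y t \<in> mball b (1/2^n\<^sub>0)"
proof -
  define \<epsilon> :: real where "\<epsilon> = 1/2^Suc n\<^sub>0"
  have \<epsilon>: "0 < \<epsilon>" "2 * \<epsilon> = 1/2^n\<^sub>0"
    by (simp_all add: \<epsilon>_def)
  obtain V where V: "openin mtopology V" "path_connectedin mtopology V" "p \<in> V" "V \<subseteq> mball p \<epsilon>"
    using assms(2,3) \<epsilon>(1) unfolding locally_path_connected_space by (meson centre_in_mball_iff openin_mball)
  then obtain \<delta> where \<delta>: "0 < \<delta>" "mball p \<delta> \<subseteq> V"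
    by (auto simp: openin_mtopology)
  show thesis
  proof
    show "0 < min \<delta> \<epsilon>" "min \<delta> \<epsilon> \<le> 1/2^Suc n\<^sub>0"
      using \<delta> \<epsilon> by (auto simp: \<epsilon>_def)
    fix m b y and t :: real
    assume m: "n\<^sub>0 \<le> m" and b: "b \<in> mball p (min \<delta> \<epsilon>)" and y: "y \<in> mball p (min \<delta> \<epsilon>)"
      and t: "t \<in> {0..1}"
    have "b \<in> V" "y \<in> V"
      using b y \<delta>(2) by auto
    then obtain g where g: "pathin mtopology g" "g \<in> {0..1} \<rightarrow> V" "g 0 = b" "g 1 = y"
      using V(2) unfolding path_connectedin by blast
    have "mball_path (1/2^n\<^sub>0) b y g"
      unfolding mball_path_def
    proof (intro conjI g(1,3,4) image_subsetI)
      fix s :: real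
      assume "s \<in> {0..1}"
      then have "g s \<in> mball p \<epsilon>"
        using g(2) V(4) by blast
      then show "g s \<in> mball b (1/2^n\<^sub>0)"
        using b \<epsilon>(2) triangle[of b p "g s"] by (auto simp: commute)
    qed
    then have "mball_path (1/2^n\<^sub>0) b y (level_path m b y)"
      using level_path(4)[OF assms(1) _ _ m] b y by auto
    then show "level_path m b y t \<in> mball b (1/2^n\<^sub>0)"
      using t unfolding mball_path_def by blast
  qed
qed

text \<open>Level \<open>0\<close> starts from an arbitrary point, so every target is admissible there.\<close>
definition near :: "nat \<Rightarrow> 'a \<Rightarrow> 'a \<Rightarrow> bool" where
  "near m b y \<longleftrightarrow> m = 0 \<or> d b y < 4/2^m"

text \<open>Along a chain started at level \<open>N + 1\<close> within \<open>2\<^sup>-\<^sup>N\<close> of \<open>p\<close>, the base point at level \<open>m\<close>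
  stays within \<open>9/2\<^sup>N - 8/2\<^sup>m\<close> of \<open>p\<close>.\<close>
lemma chain_near_in_mball:
  assumes b: "b \<in> mball p (1/2^N)" and \<delta>: "9/2^N \<le> \<delta>" "\<delta> \<le> r"
    and link: "\<And>m b y t. Suc N \<le> m \<Longrightarrow> b \<in> mball p \<delta> \<Longrightarrow> y \<in> mball p \<delta> \<Longrightarrow> 0 \<le> t \<Longrightarrow> t \<le> 1 \<Longrightarrow>
      link m b y t \<in> mball p r"
    and rs: "\<forall>r\<in>set rs. snd ` set r \<subseteq> M"
  shows "chain near link (Suc N) rs b 1 \<in> mball p r"
proof -
  define S where "S m b \<longleftrightarrow> Suc N \<le> m \<and> b \<in> mball p (9/2^N - 8/2^m)" for m b
  have S_mball: "b \<in> mball p \<delta>" if "S m b" for m b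
  proof -
    have "(0::real) < 8/2^m"
      by simp
    then show ?thesis
      using that \<delta>(1) unfolding S_def by (smt (verit) in_mball)
  qed
  have S_Suc: "S (Suc m) y" if "S m b" "near m b y" "y \<in> M" for m b y
  proof -
    have "d b y < 4/2^m"
      using that(1,2) by (auto simp: S_def near_def)
    moreover have "d p y \<le> d p b + d b y"
      using that(1,3) by (intro triangle) (auto simp: S_def)
    ultimately have "d p y < 9/2^N - 8/2^Suc m"
      using that(1) by (simp add: S_def)
    then show ?thesis
      using that by (simp add: S_def)
  qed
  show ?thesis
  proof (rule chain_in[where S = S and A = M])
    show "b \<in> mball p r" if "S m b" for m b
      using S_mball[OF that] \<delta>(2) mball_subset_concentric by blast
    show "link m b y t \<in> mball p r" if "S m b" "near m b y" "y \<in> M" "0 \<le> t" "t \<le> 1" for m b y t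
      using that S_mball[OF that(1)] S_mball[OF S_Suc[OF that(1-3)]] by (intro link) (auto simp: S_def)
    have "(1::real)/2^N \<le> 9/2^N - 8/2^Suc N"
      by (simp add: field_simps)
    then show "S (Suc N) b"
      using b mball_subset_concentric by (auto simp: S_def)
  qed (use S_Suc rs in auto)
qed

end

section \<open>Approximating maps with a strongly functionally discrete base\<close>

locale sfd_approximation = Metric_space M d for M and d :: "'b \<Rightarrow> 'b \<Rightarrow> real" +
  fixes X :: "'a topology" and f :: "'a \<Rightarrow> 'b" and y\<^sub>0 :: 'b
    and \<B> :: "nat \<Rightarrow> 'a set set" and U :: "nat \<Rightarrow> 'a set \<Rightarrow> 'a set" and \<phi> :: "nat \<Rightarrow> 'a set \<Rightarrow> 'a \<Rightarrow> real"
  assumes path_connected: "path_connected_space mtopology"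
    and locally_path_connected: "locally_path_connected_space mtopology"
    and f_in_M: "x \<in> topspace X \<Longrightarrow> f x \<in> M"
    and y\<^sub>0_in_M: "y\<^sub>0 \<in> M"
    and discrete: "discrete_family X (\<B> n) (U n)"
    and member_subset_topspace: "B \<in> \<B> n \<Longrightarrow> B \<subseteq> topspace X"
    and member_subset_U: "B \<in> \<B> n \<Longrightarrow> B \<subseteq> U n B"
    and separating: "B \<in> \<B> n \<Longrightarrow> separating_function X B (U n B) (\<phi> n B)"
    and base: "openin mtopology V \<Longrightarrow> x \<in> topspace X \<Longrightarrow> f x \<in> V \<Longrightarrow> \<exists>n. \<exists>B\<in>\<B> n. x \<in> B \<and> f ` B \<subseteq> V"
begin

definition centre :: "'a set \<Rightarrow> 'b" where
  "centre B = (if B \<noteq> {} \<and> B \<subseteq> topspace X then f (SOME x. x \<in> B) else y\<^sub>0)"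

definition narrow :: "nat \<Rightarrow> 'a set \<Rightarrow> bool" where
  "narrow m B \<longleftrightarrow> (\<forall>z\<in>B. d (f z) (centre B) < 1/2^m)"

definition covers :: "nat \<Rightarrow> 'a \<Rightarrow> bool" where
  "covers n x \<longleftrightarrow> (\<exists>B\<in>\<B> n. x \<in> U n B)"

definition selected :: "nat \<Rightarrow> 'a \<Rightarrow> 'a set" where
  "selected n x = (SOME B. B \<in> \<B> n \<and> x \<in> U n B)"

definition member_weight :: "nat \<Rightarrow> nat \<Rightarrow> nat \<Rightarrow> 'a set \<Rightarrow> 'a \<Rightarrow> real" where
  "member_weight k m n B x = (if B \<in> \<B> n \<and> narrow m B then sharpen k (\<phi> n B x) else 0)"

definition weight :: "nat \<Rightarrow> nat \<Rightarrow> nat \<Rightarrow> 'a \<Rightarrow> real" where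
  "weight k m n x = (if covers n x then member_weight k m n (selected n x) x else 0)"

text \<open>Row \<open>m\<close> of the grid lists, for \<open>n \<le> k\<close>, the weight with which the member of \<open>\<B> n\<close> around \<open>x\<close>
  pulls towards its centre at precision \<open>2\<^sup>-\<^sup>m\<close>.\<close>
definition grid :: "nat \<Rightarrow> 'a \<Rightarrow> (real \<times> 'b) list list" where
  "grid k x = map (\<lambda>m. map (\<lambda>n. (weight k m n x, centre (selected n x))) [0..<Suc k]) [0..<Suc k]"

definition approx :: "nat \<Rightarrow> 'a \<Rightarrow> 'b" where
  "approx k x = chain near level_path 0 (grid k x) y\<^sub>0 1"

lemma continuous_\<phi>: "B \<in> \<B> n \<Longrightarrow> continuous_map X euclideanreal (\<phi> n B)"
  and \<phi>_bounds: "B \<in> \<B> n \<Longrightarrow> x \<in> topspace X \<Longrightarrow> 0 \<le> \<phi> n B x \<and> \<phi> n B x \<le> 1"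
  and \<phi>_eq_1: "B \<in> \<B> n \<Longrightarrow> x \<in> topspace X \<Longrightarrow> \<phi> n B x = 1 \<longleftrightarrow> x \<in> B"
  and \<phi>_eq_0: "B \<in> \<B> n \<Longrightarrow> x \<in> topspace X \<Longrightarrow> x \<notin> U n B \<Longrightarrow> \<phi> n B x = 0"
  using separating[of B n] by (auto simp: separating_function_def)

lemma centre_in_M: "centre B \<in> M"
proof (cases "B \<noteq> {} \<and> B \<subseteq> topspace X")
  case True
  then have "(SOME x. x \<in> B) \<in> topspace X"
    by (metis some_in_eq subsetD)
  then show ?thesis
    using True by (simp add: centre_def f_in_M)
qed (auto simp: centre_def y\<^sub>0_in_M)

lemma selected: "covers n x \<Longrightarrow> selected n x \<in> \<B> n \<and> x \<in> U n (selected n x)"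
  unfolding covers_def selected_def by (rule someI_ex) blast

lemma unit_valued_member_weight: "unit_valued X (member_weight k m n B)"
proof (cases "B \<in> \<B> n \<and> narrow m B")
  case True
  then show ?thesis
    by (auto simp: unit_valued_def member_weight_def[abs_def] sharpen_bounds \<phi>_bounds continuous_\<phi>
        intro!: continuous_intros)
qed (auto simp: unit_valued_def member_weight_def[abs_def])

lemma weight_locally:
  assumes "x \<in> topspace X"
  shows "\<exists>V C. openin X V \<and> x \<in> V \<and> (\<forall>z\<in>V. covers n z \<longrightarrow> selected n z = C) \<and>
    (\<forall>z\<in>V. \<forall>k m. weight k m n z = member_weight k m n C z)"
proof -
  obtain V where V: "openin X V" "x \<in> V"
    and one: "\<And>B B'. B \<in> \<B> n \<Longrightarrow> B' \<in> \<B> n \<Longrightarrow> V \<inter> U n B \<noteq> {} \<Longrightarrow> V \<inter> U n B' \<noteq> {} \<Longrightarrow> B = B'"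
    using discrete[of n] assms unfolding discrete_family_def by metis
  define C where "C = (SOME B. B \<in> \<B> n \<and> V \<inter> U n B \<noteq> {})"
  have sel: "selected n z = C" if "z \<in> V" "covers n z" for z
  proof -
    have "selected n z \<in> \<B> n" "V \<inter> U n (selected n z) \<noteq> {}"
      using selected[OF that(2)] that(1) by blast+
    then have "C \<in> \<B> n \<and> V \<inter> U n C \<noteq> {}"
      unfolding C_def by (rule someI2[where Q = "\<lambda>B. B \<in> \<B> n \<and> V \<inter> U n B \<noteq> {}", OF conjI])
    then show ?thesis
      using one \<open>selected n z \<in> \<B> n\<close> \<open>V \<inter> U n (selected n z) \<noteq> {}\<close> by blast
  qed
  have "weight k m n z = member_weight k m n C z" if z: "z \<in> V" for z k m
  proof (cases "covers n z")
    case False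
    have "z \<in> topspace X"
      using V(1) z openin_subset by blast
    then show ?thesis
      using False z by (auto simp: weight_def member_weight_def covers_def \<phi>_eq_0)
  qed (simp add: weight_def sel z)
  with V sel show ?thesis
    by (intro exI[of _ V] exI[of _ C]) simp
qed

lemma continuous_map_approx: "continuous_map X mtopology (approx k)"
proof (rule continuous_map_locally)
  fix x
  assume x: "x \<in> topspace X"
  obtain V C where V: "\<And>n. openin X (V n)" "\<And>n. x \<in> V n"
    and sel: "\<And>n z. z \<in> V n \<Longrightarrow> covers n z \<Longrightarrow> selected n z = C n"
    and w: "\<And>n z k m. z \<in> V n \<Longrightarrow> weight k m n z = member_weight k m n (C n) z"
    using weight_locally[OF x] by metis
  define W where "W = (\<Inter>n\<le>k. V n)"
  have W: "openin X W" "x \<in> W"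
    using V by (auto simp: W_def intro!: openin_INT2)
  define rs where
    "rs = map (\<lambda>m. map (\<lambda>n. (member_weight k m n (C n), centre (C n))) [0..<Suc k]) [0..<Suc k]"
  have "continuous_map (subtopology X W) mtopology
      (\<lambda>z. chain near level_path 0 (map (map (\<lambda>e. (fst e z, snd e))) rs) y\<^sub>0 ((\<lambda>_. 1) z))"
    using level_path[OF path_connected] y\<^sub>0_in_M centre_in_M
    by (intro continuous_map_chain)
       (auto simp: rs_def unit_valued_subtopology unit_valued_member_weight unit_valued_const)
  moreover have "chain near level_path 0 (map (map (\<lambda>e. (fst e z, snd e))) rs) y\<^sub>0 1 = approx k z"
    if "z \<in> W" for z
  proof -
    have "entry_agrees (weight k m n z, centre (selected n z)) (member_weight k m n (C n) z, centre (C n))"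
      if "n \<le> k" for m n
    proof -
      have z: "z \<in> V n"
        using that \<open>z \<in> W\<close> by (auto simp: W_def)
      have "weight k m n z \<noteq> 0 \<Longrightarrow> selected n z = C n"
        using sel[OF z] unfolding weight_def by presburger
      then show ?thesis
        using w[OF z] by (auto simp: entry_agrees_def)
    qed
    then show ?thesis
      unfolding approx_def grid_def rs_def
      by (intro chain_cong[symmetric]) (auto simp: list_all2_conv_all_nth simp del: upt_Suc)
  qed
  ultimately have "continuous_map (subtopology X W) mtopology (approx k)"
    by (rule continuous_map_eq) simp
  then show "\<exists>V. openin X V \<and> x \<in> V \<and> continuous_map (subtopology X V) mtopology (approx k)"
    using W by blast
qed

definition narrow_index :: "nat \<Rightarrow> 'a \<Rightarrow> nat" where
  "narrow_index m x = (LEAST n. \<exists>B\<in>\<B> n. x \<in> B \<and> narrow m B)"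

definition narrow_member :: "nat \<Rightarrow> 'a \<Rightarrow> 'a set" where
  "narrow_member m x = (SOME B. B \<in> \<B> (narrow_index m x) \<and> x \<in> B \<and> narrow m B)"

lemma exists_narrow_member:
  assumes x: "x \<in> topspace X"
  shows "\<exists>n. \<exists>B\<in>\<B> n. x \<in> B \<and> narrow m B"
proof -
  have "\<exists>n. \<exists>B\<in>\<B> n. x \<in> B \<and> f ` B \<subseteq> mball (f x) (1/2^Suc m)"
    using base[OF openin_mball x] f_in_M[OF x] by simp
  then obtain n B where B: "B \<in> \<B> n" "x \<in> B" and fB: "f ` B \<subseteq> mball (f x) (1/2^Suc m)"
    by blast
  define z\<^sub>0 where "z\<^sub>0 = (SOME z. z \<in> B)"
  have "z\<^sub>0 \<in> B"
    unfolding z\<^sub>0_def using B(2) by (rule someI)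
  moreover have "centre B = f z\<^sub>0"
    using B member_subset_topspace by (auto simp: centre_def z\<^sub>0_def)
  ultimately have "narrow m B"
    unfolding narrow_def
  proof (intro ballI)
    fix z
    assume "z \<in> B"
    then have z: "f z \<in> mball (f x) (1/2^Suc m)" "f z\<^sub>0 \<in> mball (f x) (1/2^Suc m)"
      using fB \<open>z\<^sub>0 \<in> B\<close> by auto
    then have "d (f z) (f z\<^sub>0) \<le> d (f x) (f z) + d (f x) (f z\<^sub>0)"
      using triangle[of "f z" "f x" "f z\<^sub>0"] by (simp add: commute)
    moreover have "(1::real)/2^Suc m + 1/2^Suc m = 1/2^m"
      by simp
    ultimately show "d (f z) (centre B) < 1/2^m"
      using z \<open>centre B = f z\<^sub>0\<close> by simp
  qed
  with B show ?thesis
    by blast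
qed

lemma narrow_member:
  assumes "x \<in> topspace X"
  shows "narrow_member m x \<in> \<B> (narrow_index m x) \<and> x \<in> narrow_member m x \<and> narrow m (narrow_member m x)"
proof -
  have "\<exists>B\<in>\<B> (narrow_index m x). x \<in> B \<and> narrow m B"
    unfolding narrow_index_def by (rule LeastI_ex) (rule exists_narrow_member[OF assms])
  then have "\<exists>B. B \<in> \<B> (narrow_index m x) \<and> x \<in> B \<and> narrow m B"
    by blast
  then show ?thesis
    unfolding narrow_member_def by (rule someI_ex)
qed

lemma not_narrow_below_index: "n < narrow_index m x \<Longrightarrow> B \<in> \<B> n \<Longrightarrow> x \<in> B \<Longrightarrow> \<not> narrow m B"
  unfolding narrow_index_def using not_less_Least by blast

lemma selected_narrow_index:
  assumes x: "x \<in> topspace X"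
  shows "covers (narrow_index m x) x \<and> selected (narrow_index m x) x = narrow_member m x"
proof -
  let ?n = "narrow_index m x" and ?B = "narrow_member m x"
  have B: "?B \<in> \<B> ?n" "x \<in> U ?n ?B"
    using narrow_member[OF x] member_subset_U by blast+
  then have cov: "covers ?n x"
    by (auto simp: covers_def)
  obtain V where "openin X V" "x \<in> V"
    "\<And>B B'. B \<in> \<B> ?n \<Longrightarrow> B' \<in> \<B> ?n \<Longrightarrow> V \<inter> U ?n B \<noteq> {} \<Longrightarrow> V \<inter> U ?n B' \<noteq> {} \<Longrightarrow> B = B'"
    using discrete[of ?n] x unfolding discrete_family_def by metis
  with B selected[OF cov] have "selected ?n x = ?B"
    by blast
  with cov show ?thesis
    by blast
qed

lemma dist_centre_narrow_member:
  assumes "x \<in> topspace X"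
  shows "d (f x) (centre (narrow_member m x)) < 1/2^m"
  using narrow_member[OF assms] unfolding narrow_def by blast

lemma weight_narrow_index:
  assumes "x \<in> topspace X"
  shows "weight k m (narrow_index m x) x = 1"
proof -
  have "\<phi> (narrow_index m x) (narrow_member m x) x = 1"
    using narrow_member[OF assms] \<phi>_eq_1 assms by blast
  then show ?thesis
    using selected_narrow_index[OF assms] narrow_member[OF assms]
    by (simp add: weight_def member_weight_def)
qed

lemma eventually_weight_below_index:
  assumes x: "x \<in> topspace X" and n: "n < narrow_index m x"
  shows "eventually (\<lambda>k. weight k m n x = 0) sequentially"
proof (cases "covers n x \<and> narrow m (selected n x)")
  case True
  then have B: "selected n x \<in> \<B> n"
    using selected by blast
  then have "x \<notin> selected n x"
    using not_narrow_below_index[OF n] True by blast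
  then have "\<phi> n (selected n x) x < 1"
    using \<phi>_eq_1[OF B x] \<phi>_bounds[OF B x] by fastforce
  then show ?thesis
    using True B by (simp add: weight_def member_weight_def eventually_sharpen_eq_0)
qed (auto simp: weight_def member_weight_def)

lemma approx_eq_chain_drop:
  assumes x: "x \<in> topspace X" and "j \<le> Suc k"
    and settled: "\<And>m. m < j \<Longrightarrow> narrow_index m x \<le> k \<and> (\<forall>n<narrow_index m x. weight k m n x = 0)"
  shows "approx k x =
    chain near level_path j (drop j (grid k x)) (case j of 0 \<Rightarrow> y\<^sub>0 | Suc i \<Rightarrow> centre (narrow_member i x)) 1"
  using assms(2) settled
proof (induction j)
  case 0
  then show ?case
    by (simp add: approx_def)
next
  case (Suc j)
  let ?b = "case j of 0 \<Rightarrow> y\<^sub>0 | Suc i \<Rightarrow> centre (narrow_member i x)"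
  and ?y = "centre (narrow_member j x)"
  have j: "j < length (grid k x)" and row: "grid k x ! j = map (\<lambda>n. (weight k j n x, centre (selected n x))) [0..<Suc k]"
    using Suc.prems(1) by (simp_all add: grid_def del: upt_Suc)
  have near: "near j ?b ?y"
  proof (cases j)
    case (Suc i)
    have "d (centre (narrow_member i x)) ?y \<le> d (centre (narrow_member i x)) (f x) + d (f x) ?y"
      using x by (intro triangle) (auto simp: f_in_M centre_in_M)
    also have "\<dots> < 1/2^i + 1/2^Suc i"
      using dist_centre_narrow_member[OF x, of i] dist_centre_narrow_member[OF x, of j] Suc
      by (simp add: commute add_strict_mono)
    also have "\<dots> < 4/2^j"
      using Suc by (simp add: field_simps)
    finally show ?thesis
      using Suc by (simp add: near_def)
  qed (simp add: near_def)
  have "chain_row near level_path j (grid k x ! j) (chain near level_path (Suc j) (drop (Suc j) (grid k x))) ?b 1 =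
      chain near level_path (Suc j) (drop (Suc j) (grid k x)) ?y 1"
    using Suc.prems(2)[of j] row weight_narrow_index[OF x] selected_narrow_index[OF x] near
    by (intro chain_row_eq_next[where j = "narrow_index j x"]) (auto simp del: upt_Suc)
  then show ?case
    using Suc Cons_nth_drop_Suc[OF j, symmetric] by simp
qed

lemma eventually_approx_eq_chain:
  assumes x: "x \<in> topspace X"
  shows "eventually (\<lambda>k. approx k x =
      chain near level_path (Suc N) (drop (Suc N) (grid k x)) (centre (narrow_member N x)) 1) sequentially"
proof -
  have "eventually (\<lambda>k. (\<forall>m\<in>{..N}. \<forall>n\<in>{..<narrow_index m x}. weight k m n x = 0) \<and>
      (\<forall>m\<in>{..N}. narrow_index m x \<le> k) \<and> N \<le> k) sequentially"
    using eventually_weight_below_index[OF x]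
    by (intro eventually_conj eventually_ball_finite ballI eventually_ge_at_top) auto
  then show ?thesis
    by (rule eventually_mono) (use approx_eq_chain_drop[OF x, of "Suc N"] in auto)
qed

text \<open>The paths at levels beyond \<open>N\<close> are short by \<open>level_path_short\<close>; \<open>N\<close> is chosen so large that
  the base points of the chain stay close enough to \<open>f x\<close> for that lemma to apply.\<close>
lemma chain_from_narrow_member_in_mball:
  assumes x: "x \<in> topspace X" and \<eta>: "\<eta> > 0"
  obtains N where "\<And>rs. \<forall>r\<in>set rs. snd ` set r \<subseteq> M \<Longrightarrow>
    chain near level_path (Suc N) rs (centre (narrow_member N x)) 1 \<in> mball (f x) \<eta>"
proof -
  have fx: "f x \<in> M"
    using f_in_M[OF x] .
  have "eventually (\<lambda>n. 1/2^n < \<eta>/2) sequentially"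
    using \<eta> by (intro order_tendstoD(2)[OF LIMSEQ_divide_realpow_zero]) auto
  then obtain n\<^sub>0 where n\<^sub>0: "1/2^n\<^sub>0 < \<eta>/2"
    unfolding eventually_sequentially by blast
  have half: "(1::real)/2^Suc n\<^sub>0 < 1/2^n\<^sub>0"
    by (simp add: field_simps)
  obtain \<delta> where \<delta>: "0 < \<delta>" "\<delta> \<le> 1/2^Suc n\<^sub>0"
    and short: "\<And>m b y t. n\<^sub>0 \<le> m \<Longrightarrow> b \<in> mball (f x) \<delta> \<Longrightarrow> y \<in> mball (f x) \<delta> \<Longrightarrow> t \<in> {0..1} \<Longrightarrow>
       level_path m b y t \<in> mball b (1/2^n\<^sub>0)"
    using level_path_short[OF path_connected locally_path_connected fx] by blast
  have "eventually (\<lambda>N. n\<^sub>0 \<le> N \<and> 9/2^N < \<delta>) sequentially"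
    using \<delta>(1) by (intro eventually_conj eventually_ge_at_top order_tendstoD(2)[OF LIMSEQ_divide_realpow_zero]) auto
  then obtain N where N: "n\<^sub>0 \<le> N" "9/2^N \<le> \<delta>"
    unfolding eventually_sequentially by (blast intro: less_imp_le)
  show thesis
  proof (rule that, rule chain_near_in_mball[OF _ N(2)])
    show "centre (narrow_member N x) \<in> mball (f x) (1/2^N)"
      using dist_centre_narrow_member[OF x] fx centre_in_M by simp
    show "\<delta> \<le> \<eta>"
      using \<delta>(2) n\<^sub>0 half \<eta> by linarith
    fix m b y and t :: real
    assume m: "Suc N \<le> m" and b: "b \<in> mball (f x) \<delta>" and y: "y \<in> mball (f x) \<delta>" and "0 \<le> t" "t \<le> 1"
    then have "level_path m b y t \<in> mball b (1/2^n\<^sub>0)"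
      using N(1) by (intro short) auto
    then show "level_path m b y t \<in> mball (f x) \<eta>"
      using b \<delta>(2) n\<^sub>0 half triangle[of "f x" b "level_path m b y t"] by auto
  qed
qed

lemma limitin_approx:
  assumes x: "x \<in> topspace X"
  shows "limitin mtopology (\<lambda>k. approx k x) (f x) sequentially"
  unfolding limitin_metric
proof (intro conjI allI impI)
  show "f x \<in> M"
    using f_in_M[OF x] .
  fix \<eta> :: real
  assume "\<eta> > 0"
  then obtain N where N: "\<And>rs. \<forall>r\<in>set rs. snd ` set r \<subseteq> M \<Longrightarrow>
      chain near level_path (Suc N) rs (centre (narrow_member N x)) 1 \<in> mball (f x) \<eta>"
    using chain_from_narrow_member_in_mball[OF x] by blast
  have "\<forall>r\<in>set (drop (Suc N) (grid k x)). snd ` set r \<subseteq> M" for k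
    using centre_in_M by (auto simp: grid_def dest!: in_set_dropD simp del: upt_Suc)
  with N have "eventually (\<lambda>k. approx k x \<in> mball (f x) \<eta>) sequentially"
    by (intro eventually_mono[OF eventually_approx_eq_chain[OF x, of N]]) presburger
  then show "eventually (\<lambda>k. approx k x \<in> M \<and> d (approx k x) (f x) < \<eta>) sequentially"
    by (rule eventually_mono) (simp add: commute)
qed

end

lemma Sigma_f_star_0_decomposition:
  assumes "f \<in> Sigma_f_star_0 X Y"
  obtains \<B> :: "nat \<Rightarrow> 'a set set" and U \<phi> where "\<And>n. discrete_family X (\<B> n) (U n)"
    "\<And>n B. B \<in> \<B> n \<Longrightarrow> B \<subseteq> topspace X \<and> B \<subseteq> U n B \<and> separating_function X B (U n B) (\<phi> n B)"
    "\<And>V x. openin Y V \<Longrightarrow> x \<in> topspace X \<Longrightarrow> f x \<in> V \<Longrightarrow> \<exists>n. \<exists>B\<in>\<B> n. x \<in> B \<and> f ` B \<subseteq> V"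
proof -
  obtain \<B>\<^sub>0 where sigma: "sigma_sfd X \<B>\<^sub>0" and closed: "\<forall>B\<in>\<B>\<^sub>0. functionally_closed X B"
    and base: "base_for X Y \<B>\<^sub>0 f"
    using assms unfolding Sigma_f_star_0_def by blast
  obtain \<B> :: "nat \<Rightarrow> 'a set set" where \<B>: "\<B>\<^sub>0 = (\<Union>n. \<B> n)" "\<And>n. sfd_family X (\<B> n) id"
    using sigma unfolding sigma_sfd_def by blast
  have "\<exists>U \<phi>. discrete_family X (\<B> n) U \<and>
      (\<forall>B\<in>\<B> n. B \<subseteq> topspace X \<and> B \<subseteq> U B \<and> separating_function X B (U B) (\<phi> B))" for n
    using closed \<B> by (intro sfd_family_separating_functions) auto
  then obtain U \<phi> where "\<And>n. discrete_family X (\<B> n) (U n)"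
    "\<And>n B. B \<in> \<B> n \<Longrightarrow> B \<subseteq> topspace X \<and> B \<subseteq> U n B \<and> separating_function X B (U n B) (\<phi> n B)"
    by metis
  moreover have "\<exists>n. \<exists>B\<in>\<B> n. x \<in> B \<and> f ` B \<subseteq> V"
    if "openin Y V" "x \<in> topspace X" "f x \<in> V" for V x
  proof -
    have "\<exists>\<C>\<subseteq>\<B>\<^sub>0. \<Union>\<C> = {z \<in> topspace X. f z \<in> V}"
      using base that(1) unfolding base_for_def by simp
    then obtain \<C> where \<C>: "\<C> \<subseteq> \<B>\<^sub>0" "\<Union>\<C> = {z \<in> topspace X. f z \<in> V}"
      by (elim exE conjE)
    with that(2,3) obtain C where "C \<in> \<C>" "x \<in> C"
      by blast
    moreover from this \<C> \<B>(1) obtain n where "C \<in> \<B> n"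
      by blast
    moreover have "f ` C \<subseteq> V"
      using \<C>(2) \<open>C \<in> \<C>\<close> by blast
    ultimately show ?thesis
      by blast
  qed
  ultimately show thesis
    by (rule that)
qed

lemma (in Metric_space) Sigma_f_star_0_subset_Baire_one:
  assumes "connected_space mtopology" and lpc: "locally_path_connected_space mtopology"
  shows "Sigma_f_star_0 X mtopology \<subseteq> Baire_one X mtopology"
proof
  have pc: "path_connected_space mtopology"
    using assms path_connected_eq_connected_space by blast
  fix f
  assume f: "f \<in> Sigma_f_star_0 X mtopology"
  then have fM: "f ` topspace X \<subseteq> M"
    by (simp add: Sigma_f_star_0_def)
  show "f \<in> Baire_one X mtopology"
  proof (cases "topspace X = {}")
    case True
    then show ?thesis
      using fM unfolding Baire_one_def by (intro CollectI conjI exI[of _ "\<lambda>n. f"]) (auto simp: continuous_map_def)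
  next
    case False
    then obtain x\<^sub>0 where x\<^sub>0: "x\<^sub>0 \<in> topspace X"
      by blast
    obtain \<B> :: "nat \<Rightarrow> 'b set set" and U \<phi> where "\<And>n. discrete_family X (\<B> n) (U n)"
      "\<And>n B. B \<in> \<B> n \<Longrightarrow> B \<subseteq> topspace X \<and> B \<subseteq> U n B \<and> separating_function X B (U n B) (\<phi> n B)"
      "\<And>V x. openin mtopology V \<Longrightarrow> x \<in> topspace X \<Longrightarrow> f x \<in> V \<Longrightarrow> \<exists>n. \<exists>B\<in>\<B> n. x \<in> B \<and> f ` B \<subseteq> V"
      by (rule Sigma_f_star_0_decomposition[OF f]) (rule that; assumption)
    then interpret sfd_approximation M d X f "f x\<^sub>0" \<B> U \<phi>
      using pc lpc fM x\<^sub>0 by unfold_locales auto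
    show ?thesis
      unfolding Baire_one_def using fM continuous_map_approx limitin_approx
      by (intro CollectI conjI exI[of _ approx]) auto
  qed
qed

theorem mainTheorem6:
  fixes X :: "'a topology" and Y :: "'b topology"
  assumes "metrizable_space Y" and "connected_space Y" and "locally_arc_connected_space Y"
  shows "Sigma_f_star_0 X Y \<subseteq> Baire_one X Y"
proof -
  obtain M d where "Metric_space M d" and Y: "Y = Metric_space.mtopology M d"
    using assms(1) unfolding metrizable_space_def by blast
  interpret Metric_space M d
    by fact
  have "locally_path_connected_space Y"
    using assms(3) by (rule locally_arc_connected_imp_locally_path_connected_space)
  with assms(2) show ?thesis
    unfolding Y by (rule Sigma_f_star_0_subset_Baire_one)
qed

end
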